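(* Let $0\le a<b<1$ and $\lambda\ge 0$. Then $m(\lambda,a,b)\le\lambda+m(a,b)$, with equality if and only if $\lambda=0$.
   Context: $\zeta(t)=\frac{2}{1-t^2}$ and $\phi(t)=2\tanh^{-1}t$ on $[0,1)$. For a bounded function $\varrho\ge0$ on $[a,b]$ with $\varrho/\zeta$ non-decreasing, let $h$ be a primitive of $\varrho$, $\psi=e^h$, $\mathtt f(x)=x\zeta(x)^2\psi(x)$, $\mathtt g(x)=x\zeta(x)\psi(x)$, and $m(\varrho/\zeta,a,b):=\frac{\mathtt g(b)-\mathtt g(a)}{\int_a^b\mathtt f\,dt}$ (independent of the choice of primitive). $m(\lambda,a,b)$ denotes this quantity when $\varrho/\zeta\equiv\lambda$, i.e. $\varrho=\lambda\zeta$ (equivalently $\psi=e^{\lambda\phi}$ up to a constant factor), and $m(a,b):=m(0,a,b)=\frac{1+ab}{a+b}$. *)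

theory Defs
  imports "HOL-Analysis.Analysis"
begin

definition zeta :: "real \<Rightarrow> real" where
  "zeta t = 2 / (1 - t^2)"

definition phi :: "real \<Rightarrow> real" where
  "phi t = 2 * artanh t"

text \<open>The case rho = lambda * zeta: a primitive of rho is lambda * phi, so psi = exp (lambda * phi).\<close>
definition psi_lam :: "real \<Rightarrow> real \<Rightarrow> real" where
  "psi_lam lam x = exp (lam * phi x)"

definition f_lam :: "real \<Rightarrow> real \<Rightarrow> real" where
  "f_lam lam x = x * (zeta x)^2 * psi_lam lam x"

definition g_lam :: "real \<Rightarrow> real \<Rightarrow> real" where
  "g_lam lam x = x * zeta x * psi_lam lam x"

definition m_lam :: "real \<Rightarrow> real \<Rightarrow> real \<Rightarrow> real" where
  "m_lam lam a b = (g_lam lam b - g_lam lam a) / integral {a..b} (f_lam lam)"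

definition m0 :: "real \<Rightarrow> real \<Rightarrow> real" where
  "m0 a b = m_lam 0 a b"

end

theory Submission
  imports Defs
begin

text \<open>
  Put \<open>m = (1 + a b) / (a + b)\<close>. The quadratic \<open>(1 + x\<^sup>2) / 2 - m x\<close> has a
  root \<open>c \<in> [0, b)\<close> and on \<open>(-\<infinity>, 1)\<close> it is negative exactly to the right of \<open>c\<close>.
  Subtract \<open>\<psi>(c) (x - m) \<zeta>(x)\<close> from \<open>g(x) - (\<lambda> + m) \<integral>\<^sub>a\<^sup>x f\<close>: the correction takes
  the same value \<open>-2 \<psi>(c) / (a + b)\<close> at \<open>a\<close> and at \<open>b\<close>, and the derivative of the
  difference factors as \<open>(\<psi>(x) - \<psi>(c)) \<zeta>(x)\<^sup>2 ((1 + x\<^sup>2) / 2 - m x)\<close>, whose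
  first and last factors have opposite signs, as both change sign at \<open>c\<close>. So the difference
  decreases, strictly when \<open>\<lambda> > 0\<close> (\<open>\<psi>\<close> is then strictly increasing) and not at all when
  \<open>\<lambda> = 0\<close>; the latter identifies \<open>m(0, a, b)\<close> with \<open>m\<close>.
\<close>

lemma zeta_pos: "\<bar>x\<bar> < 1 \<Longrightarrow> 0 < zeta x"
  by (simp add: zeta_def abs_square_less_1)

lemma zeta_has_real_derivative:
  assumes "\<bar>x\<bar> < 1"
  shows "(zeta has_real_derivative x * (zeta x)^2) (at x)"
proof -
  have ne: "1 - x^2 \<noteq> 0"
    using assms by (auto simp: power2_eq_1_iff)
  have "((\<lambda>x. 2 / (1 - x^2)) has_real_derivative 4 * x / (1 - x^2)^2) (at x)"
    using ne by (auto intro!: derivative_eq_intros simp: power2_eq_square)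
  then show ?thesis
    unfolding zeta_def [abs_def] using ne by (simp add: field_simps power2_eq_square)
qed

lemma psi_lam_has_real_derivative:
  assumes "\<bar>x\<bar> < 1"
  shows "(psi_lam lam has_real_derivative lam * zeta x * psi_lam lam x) (at x)"
proof -
  have "((\<lambda>x. exp (lam * (2 * artanh x))) has_real_derivative
        exp (lam * (2 * artanh x)) * (lam * (2 * (1 / (1 - x^2))))) (at x)"
    using assms by (intro derivative_eq_intros) auto
  then show ?thesis
    unfolding psi_lam_def phi_def zeta_def [abs_def] by (simp add: algebra_simps)
qed

lemma g_lam_has_real_derivative:
  assumes "\<bar>x\<bar> < 1"
  shows "(g_lam lam has_real_derivative
          (zeta x + x^2 * (zeta x)^2) * psi_lam lam x + lam * f_lam lam x) (at x)"
proof -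
  have "((\<lambda>x. x * zeta x * psi_lam lam x) has_real_derivative
         (1 * zeta x + x * (zeta x)^2 * x) * psi_lam lam x + lam * zeta x * psi_lam lam x * (x * zeta x)) (at x)"
    by (intro DERIV_mult DERIV_ident zeta_has_real_derivative psi_lam_has_real_derivative assms)
  then show ?thesis
    unfolding g_lam_def [abs_def] f_lam_def by (simp add: algebra_simps power2_eq_square)
qed

lemma continuous_on_zeta: "continuous_on {-1<..<1} zeta"
  unfolding zeta_def by (intro continuous_intros) (auto simp: power2_eq_1_iff)

lemma continuous_on_f_lam: "continuous_on {-1<..<1} (f_lam lam)"
  unfolding f_lam_def [abs_def] psi_lam_def phi_def zeta_def
  by (intro continuous_intros) (auto simp: power2_eq_1_iff)

lemma continuous_on_g_lam: "continuous_on {-1<..<1} (g_lam lam)"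
  unfolding g_lam_def [abs_def] psi_lam_def phi_def zeta_def
  by (intro continuous_intros) (auto simp: power2_eq_1_iff)

lemma artanh_less_artanh:
  fixes x y :: real
  assumes "-1 < x" "x < y" "y < 1"
  shows "artanh x < artanh y"
proof -
  have "(1 + x) / (1 - x) < (1 + y) / (1 - y)"
    using assms by (simp add: field_simps)
  moreover have "0 < (1 + x) / (1 - x)"
    using assms by auto
  ultimately show ?thesis
    unfolding artanh_def by simp
qed

lemma psi_lam_less_psi_lam:
  assumes "-1 < x" "x < y" "y < 1" "0 < lam"
  shows "psi_lam lam x < psi_lam lam y"
  using artanh_less_artanh [OF assms(1-3)] assms(4) by (simp add: psi_lam_def phi_def)

lemma psi_lam_le_psi_lam:
  assumes "-1 < x" "x \<le> y" "y < 1" "0 \<le> lam"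
  shows "psi_lam lam x \<le> psi_lam lam y"
  using assms psi_lam_less_psi_lam [of x y lam] by (cases "x = y \<or> lam = 0") (auto simp: psi_lam_def)

lemma f_lam_pos: "0 < x \<Longrightarrow> x < 1 \<Longrightarrow> 0 < f_lam lam x"
  using zeta_pos [of x] by (simp add: f_lam_def psi_lam_def)

lemma zeta_eq_sq:
  assumes "x^2 \<noteq> 1"
  shows "zeta x = (zeta x)^2 * (1 - x^2) / 2"
proof -
  define d where "d = 1 - x^2"
  have "d \<noteq> 0"
    using assms by (simp add: d_def)
  then have "(2 / d)^2 * d / 2 = 2 / d"
    by (simp add: power2_eq_square)
  then show ?thesis
    unfolding zeta_def d_def [symmetric] by simp
qed

lemma comparison_has_real_derivative:
  assumes "\<bar>x\<bar> < 1" and F: "(F has_real_derivative f_lam lam x) (at x)"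
  shows "((\<lambda>x. g_lam lam x - (lam + m) * F x - p * ((x - m) * zeta x)) has_real_derivative
          (psi_lam lam x - p) * ((zeta x)^2 * ((1 + x^2) / 2 - m * x))) (at x)"
proof -
  let ?D = "((zeta x + x^2 * (zeta x)^2) * psi_lam lam x + lam * f_lam lam x) - (lam + m) * f_lam lam x
            - p * ((1 - 0) * zeta x + x * (zeta x)^2 * (x - m))"
  have "((\<lambda>x. g_lam lam x - (lam + m) * F x - p * ((x - m) * zeta x)) has_real_derivative ?D) (at x)"
    by (intro DERIV_diff DERIV_cmult DERIV_mult DERIV_ident DERIV_const F assms
        g_lam_has_real_derivative zeta_has_real_derivative)
  moreover have "?D - (psi_lam lam x - p) * ((zeta x)^2 * ((1 + x^2) / 2 - m * x))
      = (psi_lam lam x - p) * (zeta x - (zeta x)^2 * (1 - x^2) / 2)"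
    by (simp add: f_lam_def field_simps power2_eq_square)
  moreover have "x^2 \<noteq> 1"
    using assms by (auto simp: power2_eq_1_iff)
  ultimately show ?thesis
    using zeta_eq_sq [of x] by simp
qed

lemma half_one_plus_sq_less_iff:
  fixes m :: real
  assumes "1 < m"
  obtains c where "\<And>x. x < 1 \<Longrightarrow> (1 + x^2) / 2 < m * x \<longleftrightarrow> c < x"
proof
  define s where "s = sqrt (m^2 - 1)"
  have s: "s^2 = m^2 - 1" "0 \<le> s"
    using assms by (simp_all add: s_def abs_square_le_1 less_imp_le)
  fix x :: real
  assume "x < 1"
  then have "x - (m + s) < 0"
    using assms s by linarith
  have "(1 + x^2) / 2 < m * x \<longleftrightarrow> (1 + x^2) / 2 - m * x < 0"
    by simp
  also have "(1 + x^2) / 2 - m * x = (x - (m - s)) * (x - (m + s)) / 2"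
    using s by (simp add: field_simps power2_eq_square)
  also have "\<dots> < 0 \<longleftrightarrow> m - s < x"
    using \<open>x - (m + s) < 0\<close> by (auto simp: mult_less_0_iff)
  finally show "(1 + x^2) / 2 < m * x \<longleftrightarrow> m - s < x" .
qed

lemma diff_mult_zeta_eq:
  fixes a b :: real
  assumes "a + b \<noteq> 0" "a^2 \<noteq> 1"
  shows "(a - (1 + a * b) / (a + b)) * zeta a = - 2 / (a + b)"
proof -
  define d where "d = 1 - a^2"
  have "d \<noteq> 0"
    using assms(2) by (simp add: d_def)
  moreover have "a - (1 + a * b) / (a + b) = - d / (a + b)"
    using assms(1) by (simp add: d_def field_simps power2_eq_square)
  ultimately show ?thesis
    unfolding zeta_def d_def [symmetric] by simp
qed

lemma psi_lam_diff_mult_nonpos: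
  assumes "-1 < c" "c < 1" "-1 < x" "x < 1" "0 \<le> lam" and q: "q < 0 \<longleftrightarrow> c < x"
  shows "(psi_lam lam x - psi_lam lam c) * q \<le> 0"
proof (cases "c < x")
  case True
  then show ?thesis
    using assms psi_lam_le_psi_lam [of c x lam] by (simp add: mult_nonneg_nonpos)
next
  case False
  then show ?thesis
    using assms psi_lam_le_psi_lam [of x c lam] by (simp add: mult_nonpos_nonneg)
qed

lemma psi_lam_diff_mult_neg:
  assumes "-1 < c" "c < x" "x < 1" "0 < lam" "q < 0"
  shows "(psi_lam lam x - psi_lam lam c) * q < 0"
  using assms psi_lam_less_psi_lam [of c x lam] by (simp add: mult_pos_neg)

lemma DERIV_nonpos_imp_decreasing_strict:
  fixes D D' :: "real \<Rightarrow> real"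
  assumes "a \<le> c" "c < b" and cont: "continuous_on {a..b} D"
    and deriv: "\<And>x. a < x \<Longrightarrow> x < b \<Longrightarrow> (D has_real_derivative D' x) (at x)"
    and nonpos: "\<And>x. a < x \<Longrightarrow> x < b \<Longrightarrow> D' x \<le> 0"
    and neg: "\<And>x. c < x \<Longrightarrow> x < b \<Longrightarrow> D' x < 0"
  shows "D b < D a"
proof -
  have "D b < D c"
    using assms by (intro DERIV_neg_imp_decreasing_open [OF \<open>c < b\<close>])
      (force intro: continuous_on_subset [OF cont])+
  moreover have "D c \<le> D a"
    using assms by (intro DERIV_nonpos_imp_decreasing_open [OF \<open>a \<le> c\<close>])
      (force intro: continuous_on_subset [OF cont])+
  ultimately show ?thesis
    by simp
qed

lemma integral_has_real_derivative_interior: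
  fixes g :: "real \<Rightarrow> real"
  assumes "continuous_on {a..b} g" "a < x" "x < b"
  shows "((\<lambda>y. integral {a..y} g) has_real_derivative g x) (at x)"
  using integral_has_real_derivative [OF assms(1), of x] assms by (simp add: at_within_Icc_at)

lemma integral_f_lam_pos:
  assumes "0 \<le> a" "a < b" "b < 1"
  shows "0 < integral {a..b} (f_lam lam)"
proof -
  have cont: "continuous_on {a..b} (f_lam lam)"
    using assms by (auto intro: continuous_on_subset [OF continuous_on_f_lam])
  have "integral {a..a} (f_lam lam) < integral {a..b} (f_lam lam)"
  proof (rule DERIV_pos_imp_increasing_open [OF \<open>a < b\<close>])
    show "continuous_on {a..b} (\<lambda>y. integral {a..y} (f_lam lam))"
      using cont by (intro indefinite_integral_continuous_1 integrable_continuous_interval)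
    fix x assume "a < x" "x < b"
    then show "\<exists>y. ((\<lambda>y. integral {a..y} (f_lam lam)) has_real_derivative y) (at x) \<and> 0 < y"
      using assms integral_has_real_derivative_interior [OF cont] f_lam_pos by force
  qed
  then show ?thesis
    by simp
qed

locale unit_subinterval =
  fixes a b :: real
  assumes nonneg: "0 \<le> a" and less: "a < b" and less_one: "b < 1"
begin

definition m :: real where
  "m = (1 + a * b) / (a + b)"

lemma sum_pos: "0 < a + b"
  using nonneg less by linarith

lemma m_gt_1: "1 < m"
proof -
  have "(1 + a * b) - (a + b) = (1 - a) * (1 - b)"
    by (simp add: algebra_simps)
  moreover have "(1 - a) * (1 - b) > 0"
    using less less_one by simp
  ultimately show ?thesis
    using sum_pos by (simp add: m_def field_simps)
qed

lemma sign_change_point: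
  obtains c where "0 \<le> c" "c < b" "\<And>x. x < 1 \<Longrightarrow> (1 + x^2) / 2 < m * x \<longleftrightarrow> c < x"
proof -
  obtain c where c: "\<And>x. x < 1 \<Longrightarrow> (1 + x^2) / 2 < m * x \<longleftrightarrow> c < x"
    using half_one_plus_sq_less_iff [OF m_gt_1] by blast
  have "(1 + b^2) / 2 - m * b = (a - b) * (1 - b^2) / (2 * (a + b))"
    using sum_pos by (simp add: m_def field_simps power2_eq_square)
  moreover have "(a - b) * (1 - b^2) < 0"
    using nonneg less less_one by (simp add: mult_neg_pos abs_square_less_1)
  moreover have "0 < 2 * (a + b)"
    using sum_pos by simp
  ultimately have "(1 + b^2) / 2 < m * b"
    by (metis divide_neg_pos diff_less_0_iff_less)
  then have "c < b"
    using c [of b] less_one by simp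
  moreover have "0 \<le> c"
    using c [of 0] by simp
  ultimately show ?thesis
    using c that by blast
qed

lemma continuous_on_f_lam_Icc: "continuous_on {a..b} (f_lam lam)"
  using nonneg less_one by (auto intro: continuous_on_subset [OF continuous_on_f_lam])

definition comparison :: "real \<Rightarrow> real \<Rightarrow> real \<Rightarrow> real" where
  "comparison lam p x = g_lam lam x - (lam + m) * integral {a..x} (f_lam lam) - p * ((x - m) * zeta x)"

lemma continuous_on_comparison: "continuous_on {a..b} (comparison lam p)"
  unfolding comparison_def [abs_def] using nonneg less_one continuous_on_f_lam_Icc
  by (intro continuous_intros indefinite_integral_continuous_1 integrable_continuous_interval
      continuous_on_subset [OF continuous_on_g_lam] continuous_on_subset [OF continuous_on_zeta]) auto

lemma comparison_has_real_derivative_interior: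
  assumes "a < x" "x < b"
  shows "(comparison lam p has_real_derivative
          (psi_lam lam x - p) * ((zeta x)^2 * ((1 + x^2) / 2 - m * x))) (at x)"
  unfolding comparison_def [abs_def] using assms nonneg less_one
  by (intro comparison_has_real_derivative
      integral_has_real_derivative_interior [OF continuous_on_f_lam_Icc]) auto

lemma comparison_increment:
  "comparison lam p b - comparison lam p a
     = g_lam lam b - g_lam lam a - (lam + m) * integral {a..b} (f_lam lam)"
proof -
  have "a^2 \<noteq> 1" "b^2 \<noteq> 1"
    using nonneg less less_one by (auto simp: power2_eq_1_iff)
  then have "(a - m) * zeta a = (b - m) * zeta b"
    using diff_mult_zeta_eq [of a b] diff_mult_zeta_eq [of b a] sum_pos
    unfolding m_def mult.commute [of b a] add.commute [of b a] by simp
  then show ?thesis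
    by (simp add: comparison_def)
qed

lemma g_lam_increment_less:
  assumes "0 < lam"
  shows "g_lam lam b - g_lam lam a < (lam + m) * integral {a..b} (f_lam lam)"
proof -
  obtain c where c: "0 \<le> c" "c < b" "\<And>x. x < 1 \<Longrightarrow> (1 + x^2) / 2 < m * x \<longleftrightarrow> c < x"
    using sign_change_point by blast
  define D' where "D' x = (psi_lam lam x - psi_lam lam c) * ((zeta x)^2 * ((1 + x^2) / 2 - m * x))" for x
  have nonpos: "D' x \<le> 0" if "a < x" "x < b" for x
    using psi_lam_diff_mult_nonpos [of c x lam] that c(3) [of x] assms c(1,2) nonneg less_one
    by (simp add: D'_def mult.left_commute [of _ "(zeta x)^2"] mult_nonneg_nonpos)
  have neg: "D' x < 0" if "max a c < x" "x < b" for x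
  proof -
    have "(psi_lam lam x - psi_lam lam c) * ((1 + x^2) / 2 - m * x) < 0"
      using psi_lam_diff_mult_neg [of c x lam] c that assms less_one by simp
    moreover have "0 < (zeta x)^2"
      using zeta_pos [of x] that nonneg less_one by simp
    ultimately show ?thesis
      by (simp add: D'_def mult.left_commute [of _ "(zeta x)^2"] mult_pos_neg)
  qed
  have "comparison lam (psi_lam lam c) b < comparison lam (psi_lam lam c) a"
    using c(2) less nonpos neg continuous_on_comparison
    by (intro DERIV_nonpos_imp_decreasing_strict [of a "max a c" b _ D'])
      (auto simp: D'_def comparison_has_real_derivative_interior)
  then show ?thesis
    using comparison_increment [of lam "psi_lam lam c"] by simp
qed

lemma g_lam_increment_eq_0:
  "g_lam 0 b - g_lam 0 a = m * integral {a..b} (f_lam 0)"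
proof -
  have "comparison 0 1 b = comparison 0 1 a"
    using less continuous_on_comparison comparison_has_real_derivative_interior [of _ 0 1]
    by (intro DERIV_isconst_end) (auto simp: psi_lam_def)
  then show ?thesis
    using comparison_increment [of 0 1] by simp
qed

end

lemma m0_eq:
  assumes "0 \<le> a" "a < b" "b < 1"
  shows "m0 a b = (1 + a * b) / (a + b)"
proof -
  interpret unit_subinterval a b
    using assms by unfold_locales
  show ?thesis
    using g_lam_increment_eq_0 integral_f_lam_pos [OF assms, of 0]
    by (simp add: m0_def m_lam_def m_def)
qed

lemma m_lam_less:
  assumes "0 \<le> a" "a < b" "b < 1" "0 < lam"
  shows "m_lam lam a b < lam + m0 a b"
proof -
  interpret unit_subinterval a b
    using assms by unfold_locales
  show ?thesis
    using g_lam_increment_less [OF assms(4)] integral_f_lam_pos [OF assms(1-3), of lam]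
    by (simp add: m_lam_def m0_eq [OF assms(1-3)] m_def pos_divide_less_eq)
qed

theorem mainTheorem8:
  fixes a b lam :: real
  assumes "0 \<le> a" "a < b" "b < 1" "0 \<le> lam"
  shows "m_lam lam a b \<le> lam + m0 a b \<and> (m_lam lam a b = lam + m0 a b \<longleftrightarrow> lam = 0)"
proof (cases "lam = 0")
  case True
  then show ?thesis
    by (simp add: m0_def)
next
  case False
  then have "m_lam lam a b < lam + m0 a b"
    using assms by (intro m_lam_less) auto
  with False show ?thesis
    by simp
qed

end
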